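(* Let $\Sigma$ be a complete rational polyhedral fan in $\mathbb{R}^n$ with primitive ray generators $u_1,\ldots,u_k$, with base locus $Z\subset\mathbb{C}^k$ and group $G\subset(\mathbb{C}^* )^k$ of the Cox construction (see context). For $z\in\mathbb{C}^k\setminus Z$, let $\overline{G\cdot z}\subset\mathbb{P}^k$ denote the Zariski closure of $\{(1:y_1:\cdots:y_k)\mid (y_1,\ldots,y_k)\in G\cdot z\}$. Then the dimension and the degree of the projective variety $\overline{G\cdot z}$ depend only on which $(\mathbb{C}^* )^k$-orbit $z$ belongs to; equivalently, they depend only on the index set $\mathscr I=\{i\mid z_i\neq 0\}$.
   Context: $F=[u_1~\cdots~u_k]\in\mathbb{Z}^{n\times k}$. The base locus is $Z=V_{\mathbb{C}^k}(B)$ where $B\subset\mathbb{C}[x_1,\ldots,x_k]$ is generated by the monomials $\prod_{i:\rho_i\not\subset\sigma}x_i$, $\sigma$ ranging over the $n$-dimensional cones of $\Sigma$ ($\rho_i$ the ray generated by $u_i$). $G=\{g\in(\mathbb{C}^* )^k\mid \prod_{j}g_j^{F_{i,j}}=1,\ i=1,\ldots,n\}$ acts on $\mathbb{C}^k\setminus Z$ by coordinatewise multiplication, $g\cdot z=(g_1z_1,\ldots,g_kz_k)$. *)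

theory Defs
  imports "HOL-Analysis.Analysis"
begin

definition rvec :: "int^'n \<Rightarrow> real^'n" where
  "rvec w = (\<chi> i. real_of_int (w $ i))"

definition lat_cone_hull :: "(int^'n) set \<Rightarrow> (real^'n) set" where
  "lat_cone_hull V = {x. \<exists>c. (\<forall>v\<in>V. 0 \<le> c v) \<and> x = (\<Sum>v\<in>V. c v *\<^sub>R rvec v)}"

definition rational_polyhedral_cone :: "(real^'n) set \<Rightarrow> bool" where
  "rational_polyhedral_cone \<sigma> \<longleftrightarrow> (\<exists>V. finite V \<and> \<sigma> = lat_cone_hull V)"

definition strongly_convex :: "(real^'n) set \<Rightarrow> bool" where
  "strongly_convex \<sigma> \<longleftrightarrow> \<sigma> \<inter> uminus ` \<sigma> = {0}"

definition rational_fan :: "(real^'n) set set \<Rightarrow> bool" where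
  "rational_fan \<Sigma> \<longleftrightarrow> finite \<Sigma> \<and>
     (\<forall>\<sigma>\<in>\<Sigma>. rational_polyhedral_cone \<sigma> \<and> strongly_convex \<sigma>) \<and>
     (\<forall>\<sigma>\<in>\<Sigma>. \<forall>\<tau>. \<tau> face_of \<sigma> \<and> \<tau> \<noteq> {} \<longrightarrow> \<tau> \<in> \<Sigma>) \<and>
     (\<forall>\<sigma>\<in>\<Sigma>. \<forall>\<tau>\<in>\<Sigma>. (\<sigma> \<inter> \<tau>) face_of \<sigma> \<and> (\<sigma> \<inter> \<tau>) face_of \<tau>)"

definition complete_fan :: "(real^'n) set set \<Rightarrow> bool" where
  "complete_fan \<Sigma> \<longleftrightarrow> rational_fan \<Sigma> \<and> \<Union>\<Sigma> = UNIV"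

definition ray_of :: "int^'n \<Rightarrow> (real^'n) set" where
  "ray_of w = {t *\<^sub>R rvec w | t. 0 \<le> t}"

definition primitive_lattice_vec :: "int^'n \<Rightarrow> bool" where
  "primitive_lattice_vec w \<longleftrightarrow> w \<noteq> 0 \<and>
     (\<forall>v::int^'n. \<forall>m::int. 0 < m \<and> w = (\<chi> i. m * v $ i) \<longrightarrow> m = 1)"

definition ray_generators :: "(real^'n) set set \<Rightarrow> nat \<Rightarrow> (nat \<Rightarrow> int^'n) \<Rightarrow> bool" where
  "ray_generators \<Sigma> k u \<longleftrightarrow> inj_on u {1..k} \<and>
     (\<forall>i\<in>{1..k}. primitive_lattice_vec (u i)) \<and>
     {\<sigma>\<in>\<Sigma>. dim \<sigma> = 1} = (\<lambda>i. ray_of (u i)) ` {1..k}"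

text \<open>Points of C^k are functions nat => complex supported on {1..k}.\<close>
definition cspace :: "nat \<Rightarrow> (nat \<Rightarrow> complex) set" where
  "cspace k = {z. \<forall>i. i \<notin> {1..k} \<longrightarrow> z i = 0}"

text \<open>Base locus Z = V(B): common zeros of the monomials prod_{rho_i not in sigma} x_i,
  sigma ranging over the n-dimensional cones.\<close>
definition base_locus :: "(real^'n) set set \<Rightarrow> nat \<Rightarrow> (nat \<Rightarrow> int^'n) \<Rightarrow> (nat \<Rightarrow> complex) set" where
  "base_locus \<Sigma> k u = {z \<in> cspace k. \<forall>\<sigma>\<in>\<Sigma>. dim \<sigma> = CARD('n) \<longrightarrow>
       (\<Prod>i\<in>{i\<in>{1..k}. \<not> ray_of (u i) \<subseteq> \<sigma>}. z i) = 0}"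

definition cox_group :: "nat \<Rightarrow> (nat \<Rightarrow> int^'n) \<Rightarrow> (nat \<Rightarrow> complex) set" where
  "cox_group k u = {g. (\<forall>i. i \<notin> {1..k} \<longrightarrow> g i = 1) \<and> (\<forall>j\<in>{1..k}. g j \<noteq> 0) \<and>
       (\<forall>r::'n. (\<Prod>j\<in>{1..k}. g j powi (u j $ r)) = 1)}"

definition torus :: "nat \<Rightarrow> (nat \<Rightarrow> complex) set" where
  "torus k = {g. (\<forall>i. i \<notin> {1..k} \<longrightarrow> g i = 1) \<and> (\<forall>j\<in>{1..k}. g j \<noteq> 0)}"

definition act :: "(nat \<Rightarrow> complex) \<Rightarrow> (nat \<Rightarrow> complex) \<Rightarrow> (nat \<Rightarrow> complex)" where
  "act g z = (\<lambda>i. g i * z i)"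

definition cox_orbit :: "nat \<Rightarrow> (nat \<Rightarrow> int^'n) \<Rightarrow> (nat \<Rightarrow> complex) \<Rightarrow> (nat \<Rightarrow> complex) set" where
  "cox_orbit k u z = (\<lambda>g. act g z) ` cox_group k u"

text \<open>A subset of P^k is represented by its affine cone minus the origin: a set of
  nonzero vectors x : nat => complex supported on {0..k}.\<close>
definition pspace :: "nat \<Rightarrow> (nat \<Rightarrow> complex) set" where
  "pspace k = {x. (\<forall>i>k. x i = 0) \<and> (\<exists>i\<le>k. x i \<noteq> 0)}"

definition monomials :: "nat \<Rightarrow> nat \<Rightarrow> (nat \<Rightarrow> nat) set" where
  "monomials k d = {\<alpha>. (\<forall>i>k. \<alpha> i = 0) \<and> (\<Sum>i\<le>k. \<alpha> i) = d}"

definition mono_eval :: "nat \<Rightarrow> (nat \<Rightarrow> nat) \<Rightarrow> (nat \<Rightarrow> complex) \<Rightarrow> complex" where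
  "mono_eval k \<alpha> x = (\<Prod>i\<le>k. x i ^ \<alpha> i)"

text \<open>Homogeneous polynomial of degree d in x_0..x_k, given by its coefficient function.\<close>
definition hom_poly :: "nat \<Rightarrow> nat \<Rightarrow> ((nat \<Rightarrow> nat) \<Rightarrow> complex) \<Rightarrow> bool" where
  "hom_poly k d p \<longleftrightarrow> finite {\<alpha>. p \<alpha> \<noteq> 0} \<and> {\<alpha>. p \<alpha> \<noteq> 0} \<subseteq> monomials k d"

definition poly_eval :: "nat \<Rightarrow> ((nat \<Rightarrow> nat) \<Rightarrow> complex) \<Rightarrow> (nat \<Rightarrow> complex) \<Rightarrow> complex" where
  "poly_eval k p x = (\<Sum>\<alpha>\<in>{\<alpha>. p \<alpha> \<noteq> 0}. p \<alpha> * mono_eval k \<alpha> x)"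

definition zariski_closed :: "nat \<Rightarrow> (nat \<Rightarrow> complex) set \<Rightarrow> bool" where
  "zariski_closed k X \<longleftrightarrow> (\<exists>P. (\<forall>p\<in>P. \<exists>d. hom_poly k d p) \<and>
      X = {x \<in> pspace k. \<forall>p\<in>P. poly_eval k p x = 0})"

definition zariski_closure :: "nat \<Rightarrow> (nat \<Rightarrow> complex) set \<Rightarrow> (nat \<Rightarrow> complex) set" where
  "zariski_closure k S = \<Inter>{X. zariski_closed k X \<and> S \<subseteq> X}"

definition zariski_irreducible :: "nat \<Rightarrow> (nat \<Rightarrow> complex) set \<Rightarrow> bool" where
  "zariski_irreducible k X \<longleftrightarrow> zariski_closed k X \<and> X \<noteq> {} \<and>
     (\<forall>A B. zariski_closed k A \<and> zariski_closed k B \<and> X = A \<union> B \<longrightarrow> X = A \<or> X = B)"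

definition proj_dim :: "nat \<Rightarrow> (nat \<Rightarrow> complex) set \<Rightarrow> nat" where
  "proj_dim k X = Sup {m. \<exists>C :: nat \<Rightarrow> (nat \<Rightarrow> complex) set.
       (\<forall>i\<le>m. zariski_irreducible k (C i)) \<and> (\<forall>i<m. C i \<subset> C (Suc i)) \<and> C m \<subseteq> X}"

text \<open>Hilbert function: dimension of the degree-d part of the homogeneous coordinate
  ring, i.e. the rank of the degree-d monomials as functions on (the cone over) X.\<close>
definition lin_indep_on :: "nat \<Rightarrow> (nat \<Rightarrow> complex) set \<Rightarrow> (nat \<Rightarrow> nat) set \<Rightarrow> bool" where
  "lin_indep_on k X M \<longleftrightarrow> (\<forall>c. (\<forall>x\<in>X. (\<Sum>\<alpha>\<in>M. c \<alpha> * mono_eval k \<alpha> x) = 0) \<longrightarrow> (\<forall>\<alpha>\<in>M. c \<alpha> = 0))"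

definition hilbert_function :: "nat \<Rightarrow> (nat \<Rightarrow> complex) set \<Rightarrow> nat \<Rightarrow> nat" where
  "hilbert_function k X d = Max {card M | M. M \<subseteq> monomials k d \<and> lin_indep_on k X M}"

text \<open>Degree: (dim X)! times the leading coefficient of the Hilbert polynomial.\<close>
definition proj_degree :: "nat \<Rightarrow> (nat \<Rightarrow> complex) set \<Rightarrow> real" where
  "proj_degree k X = fact (proj_dim k X) *
     lim (\<lambda>t. real (hilbert_function k X t) / real t ^ proj_dim k X)"

definition orbit_closure :: "nat \<Rightarrow> (nat \<Rightarrow> int^'n) \<Rightarrow> (nat \<Rightarrow> complex) \<Rightarrow> (nat \<Rightarrow> complex) set" where
  "orbit_closure k u z = zariski_closure k
     {x \<in> pspace k. \<exists>c y. c \<noteq> 0 \<and> y \<in> cox_orbit k u z \<and> x 0 = c \<and> (\<forall>i\<in>{1..k}. x i = c * y i)}"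

end

theory Submission
  imports Defs
begin

text \<open>The diagonal torus acts on P^k by the scalings x \<mapsto> (x_0 : t_1 x_1 : ... : t_k x_k).
  Such a scaling is a bijection mapping Zariski closed sets to Zariski closed sets in both
  directions (a polynomial composed with it is again a polynomial of the same degree), so
  it preserves chains of irreducible closed subsets and hence dimension; it multiplies
  every monomial by a nonzero constant, so it preserves linear independence of monomials
  on a set and hence the Hilbert function and the degree. Since the torus commutes with G,
  the scaling by t maps the orbit closure of z onto that of t \<cdot> z. Finally two points
  of C^k with the same support differ by a torus element. Neither the fan structure nor
  the base locus plays a role.\<close>

definition zariski_homeomorphism :: "nat \<Rightarrow> ((nat \<Rightarrow> complex) \<Rightarrow> (nat \<Rightarrow> complex)) \<Rightarrow> bool" where
  "zariski_homeomorphism k h \<longleftrightarrow> bij h \<and> (\<forall>X. zariski_closed k (h ` X) \<longleftrightarrow> zariski_closed k X)"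

lemma zariski_homeomorphism_inv:
  assumes "zariski_homeomorphism k h"
  shows "zariski_homeomorphism k (inv h)"
proof -
  have h: "bij h" and closed: "\<And>X. zariski_closed k (h ` X) \<longleftrightarrow> zariski_closed k X"
    using assms unfolding zariski_homeomorphism_def by auto
  have "zariski_closed k (inv h ` X) \<longleftrightarrow> zariski_closed k X" for X
    using closed[of "inv h ` X"] image_f_inv_f[OF bij_is_surj[OF h]] by simp
  then show ?thesis
    unfolding zariski_homeomorphism_def using bij_imp_bij_inv[OF h] by blast
qed

lemma zariski_closure_image:
  assumes "zariski_homeomorphism k h"
  shows "zariski_closure k (h ` S) = h ` zariski_closure k S"
proof -
  have h: "bij h" and closed: "\<And>X. zariski_closed k (h ` X) \<longleftrightarrow> zariski_closed k X"
    using assms unfolding zariski_homeomorphism_def by auto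
  have surj: "range h = UNIV"
    using bij_is_surj[OF h] .
  have closed_supersets:
    "{X. zariski_closed k X \<and> h ` S \<subseteq> X} = image h ` {Y. zariski_closed k Y \<and> S \<subseteq> Y}"
  proof (intro set_eqI iffI)
    fix X assume X: "X \<in> {X. zariski_closed k X \<and> h ` S \<subseteq> X}"
    then have "h -` X \<in> {Y. zariski_closed k Y \<and> S \<subseteq> Y}"
      using closed[of "h -` X"] by (auto simp: surj)
    moreover have "X = h ` (h -` X)"
      by (simp add: surj)
    ultimately show "X \<in> image h ` {Y. zariski_closed k Y \<and> S \<subseteq> Y}"
      by blast
  next
    fix X assume "X \<in> image h ` {Y. zariski_closed k Y \<and> S \<subseteq> Y}"
    then show "X \<in> {X. zariski_closed k X \<and> h ` S \<subseteq> X}"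
      using closed by auto
  qed
  have image_Inter: "h ` \<Inter>F = \<Inter>(image h ` F)" for F
    using bij_image_INT[OF h, of "\<lambda>Y. Y" F] by simp
  show ?thesis
    unfolding zariski_closure_def closed_supersets image_Inter ..
qed

lemma zariski_irreducible_image:
  assumes "zariski_homeomorphism k h" and "zariski_irreducible k X"
  shows "zariski_irreducible k (h ` X)"
proof -
  have h: "bij h" and closed: "\<And>X. zariski_closed k (h ` X) \<longleftrightarrow> zariski_closed k X"
    using assms(1) unfolding zariski_homeomorphism_def by auto
  have surj: "\<And>Y. h ` (h -` Y) = Y"
    using surj_image_vimage_eq[OF bij_is_surj[OF h]] .
  have irr: "X = A \<or> X = B"
    if "zariski_closed k A" "zariski_closed k B" "X = A \<union> B" for A B
    using assms(2) that unfolding zariski_irreducible_def by blast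
  have "h ` X = A \<or> h ` X = B"
    if A: "zariski_closed k A" and B: "zariski_closed k B" and AB: "h ` X = A \<union> B" for A B
  proof -
    have "h ` X = h ` (h -` A \<union> h -` B)"
      by (simp only: AB image_Un surj)
    then have "X = h -` A \<union> h -` B"
      by (simp only: inj_image_eq_iff[OF bij_is_inj[OF h]])
    moreover have "zariski_closed k (h -` A)" "zariski_closed k (h -` B)"
      using closed[of "h -` A"] closed[of "h -` B"] A B unfolding surj by simp_all
    ultimately have "X = h -` A \<or> X = h -` B"
      using irr by blast
    then show ?thesis
      using surj by metis
  qed
  moreover have "zariski_closed k (h ` X)" "h ` X \<noteq> {}"
    using assms(2) closed unfolding zariski_irreducible_def by simp_all
  ultimately show ?thesis
    unfolding zariski_irreducible_def by blast
qed

definition irreducible_chain_lengths :: "nat \<Rightarrow> (nat \<Rightarrow> complex) set \<Rightarrow> nat set" where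
  "irreducible_chain_lengths k X = {m. \<exists>C :: nat \<Rightarrow> (nat \<Rightarrow> complex) set.
       (\<forall>i\<le>m. zariski_irreducible k (C i)) \<and> (\<forall>i<m. C i \<subset> C (Suc i)) \<and> C m \<subseteq> X}"

lemma proj_dim_eq_Sup_irreducible_chain_lengths:
  "proj_dim k X = Sup (irreducible_chain_lengths k X)"
  unfolding proj_dim_def irreducible_chain_lengths_def by (rule refl)

lemma irreducible_chain_lengths_image:
  assumes "zariski_homeomorphism k h"
  shows "irreducible_chain_lengths k X \<subseteq> irreducible_chain_lengths k (h ` X)"
proof
  fix m assume "m \<in> irreducible_chain_lengths k X"
  then obtain C where irred: "\<forall>i\<le>m. zariski_irreducible k (C i)"
    and strict: "\<forall>i<m. C i \<subset> C (Suc i)" and top: "C m \<subseteq> X"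
    unfolding irreducible_chain_lengths_def by blast
  have inj: "inj h"
    using assms unfolding zariski_homeomorphism_def by (simp add: bij_is_inj)
  have "\<forall>i<m. h ` C i \<subset> h ` C (Suc i)"
    using strict by (simp add: psubset_eq inj_image_subset_iff[OF inj] inj_image_eq_iff[OF inj])
  moreover have "\<forall>i\<le>m. zariski_irreducible k (h ` C i)"
    using irred zariski_irreducible_image[OF assms] by blast
  moreover have "h ` C m \<subseteq> h ` X"
    using top by (rule image_mono)
  ultimately show "m \<in> irreducible_chain_lengths k (h ` X)"
    unfolding irreducible_chain_lengths_def by (intro CollectI exI[of _ "\<lambda>i. h ` C i"] conjI)
qed

lemma proj_dim_image:
  assumes "zariski_homeomorphism k h"
  shows "proj_dim k (h ` X) = proj_dim k X"
proof -
  have "inv h ` h ` X = X"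
    using assms unfolding zariski_homeomorphism_def by (simp add: bij_is_inj image_image)
  then have "irreducible_chain_lengths k (h ` X) \<subseteq> irreducible_chain_lengths k X"
    using irreducible_chain_lengths_image[OF zariski_homeomorphism_inv[OF assms], of "h ` X"]
    by simp
  with irreducible_chain_lengths_image[OF assms, of X] show ?thesis
    unfolding proj_dim_eq_Sup_irreducible_chain_lengths by simp
qed

lemma mono_eval_act: "mono_eval k \<alpha> (act t x) = mono_eval k \<alpha> t * mono_eval k \<alpha> x"
  unfolding mono_eval_def act_def by (simp add: power_mult_distrib prod.distrib)

lemma mono_eval_nonzero: "(\<And>i. t i \<noteq> 0) \<Longrightarrow> mono_eval k \<alpha> t \<noteq> 0"
  unfolding mono_eval_def by simp

lemma act_inverse_act: "(\<And>i. t i \<noteq> 0) \<Longrightarrow> act (inverse \<circ> t) (act t x) = x"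
  unfolding act_def by (simp add: field_simps)

lemma act_act_inverse: "(\<And>i. t i \<noteq> 0) \<Longrightarrow> act t (act (inverse \<circ> t) x) = x"
  unfolding act_def by (simp add: field_simps)

lemma bij_act: "(\<And>i. t i \<noteq> 0) \<Longrightarrow> bij (act t)"
  by (rule o_bij[of "act (inverse \<circ> t)"]) (simp_all add: fun_eq_iff act_inverse_act act_act_inverse)

lemma pspace_act_iff: "(\<And>i. t i \<noteq> 0) \<Longrightarrow> act t x \<in> pspace k \<longleftrightarrow> x \<in> pspace k"
  unfolding pspace_def act_def by simp

lemma poly_eval_act:
  assumes "\<And>i. t i \<noteq> 0"
  shows "poly_eval k p (act t x) = poly_eval k (\<lambda>\<alpha>. p \<alpha> * mono_eval k \<alpha> t) x"
proof -
  have "{\<alpha>. p \<alpha> * mono_eval k \<alpha> t \<noteq> 0} = {\<alpha>. p \<alpha> \<noteq> 0}"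
    using mono_eval_nonzero[OF assms] by auto
  then show ?thesis
    unfolding poly_eval_def by (simp add: mono_eval_act mult.assoc)
qed

lemma hom_poly_rescale:
  assumes "\<And>i. t i \<noteq> 0"
  shows "hom_poly k d (\<lambda>\<alpha>. p \<alpha> * mono_eval k \<alpha> t) \<longleftrightarrow> hom_poly k d p"
  unfolding hom_poly_def using mono_eval_nonzero[OF assms] by simp

lemma zariski_closed_act_vimage:
  assumes t: "\<And>i. t i \<noteq> 0" and "zariski_closed k X"
  shows "zariski_closed k (act t -` X)"
proof -
  obtain P where hom: "\<forall>p\<in>P. \<exists>d. hom_poly k d p"
    and X: "X = {x \<in> pspace k. \<forall>p\<in>P. poly_eval k p x = 0}"
    using assms(2) unfolding zariski_closed_def by blast
  define P' where "P' = (\<lambda>p \<alpha>. p \<alpha> * mono_eval k \<alpha> t) ` P"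
  have "\<forall>p\<in>P'. \<exists>d. hom_poly k d p"
    using hom unfolding P'_def by (simp add: hom_poly_rescale[OF t])
  moreover have "act t -` X = {x \<in> pspace k. \<forall>p\<in>P'. poly_eval k p x = 0}"
    unfolding X P'_def by (simp add: set_eq_iff pspace_act_iff[OF t] poly_eval_act[OF t])
  ultimately show ?thesis
    unfolding zariski_closed_def by blast
qed

lemma act_image_eq_vimage: "(\<And>i. t i \<noteq> 0) \<Longrightarrow> act t ` X = act (inverse \<circ> t) -` X"
  by (auto simp: act_inverse_act) (metis act_act_inverse image_eqI)

lemma zariski_homeomorphism_act:
  assumes t: "\<And>i. t i \<noteq> 0"
  shows "zariski_homeomorphism k (act t)"
proof -
  have inv_t: "\<And>i. (inverse \<circ> t) i \<noteq> 0"
    using t by simp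
  have "zariski_closed k (act t ` X) \<longleftrightarrow> zariski_closed k X" for X
  proof
    assume "zariski_closed k (act t ` X)"
    then have "zariski_closed k (act t -` act t ` X)"
      by (rule zariski_closed_act_vimage[OF t])
    then show "zariski_closed k X"
      by (simp only: inj_vimage_image_eq[OF bij_is_inj[OF bij_act[OF t]]])
  next
    assume "zariski_closed k X"
    then show "zariski_closed k (act t ` X)"
      unfolding act_image_eq_vimage[OF t] by (rule zariski_closed_act_vimage[OF inv_t])
  qed
  then show ?thesis
    unfolding zariski_homeomorphism_def by (simp add: bij_act[OF t])
qed

lemma lin_indep_on_act_image:
  assumes t: "\<And>i. t i \<noteq> 0" and "lin_indep_on k X M"
  shows "lin_indep_on k (act t ` X) M"
  unfolding lin_indep_on_def
proof (intro allI impI)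
  have indep: "\<And>c. \<forall>x\<in>X. (\<Sum>\<alpha>\<in>M. c \<alpha> * mono_eval k \<alpha> x) = 0 \<Longrightarrow> \<forall>\<alpha>\<in>M. c \<alpha> = 0"
    using assms(2) unfolding lin_indep_on_def by blast
  fix c assume "\<forall>x\<in>act t ` X. (\<Sum>\<alpha>\<in>M. c \<alpha> * mono_eval k \<alpha> x) = 0"
  then have "\<forall>x\<in>X. (\<Sum>\<alpha>\<in>M. (c \<alpha> * mono_eval k \<alpha> t) * mono_eval k \<alpha> x) = 0"
    by (simp add: mono_eval_act mult.assoc)
  then have "\<forall>\<alpha>\<in>M. c \<alpha> * mono_eval k \<alpha> t = 0"
    by (rule indep)
  then show "\<forall>\<alpha>\<in>M. c \<alpha> = 0"
    using mono_eval_nonzero[OF t] by simp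
qed

lemma hilbert_function_act_image:
  assumes t: "\<And>i. t i \<noteq> 0"
  shows "hilbert_function k (act t ` X) d = hilbert_function k X d"
proof -
  have inv_t: "\<And>i. (inverse \<circ> t) i \<noteq> 0"
    using t by simp
  have cancel: "act (inverse \<circ> t) ` act t ` X = X"
    by (simp add: image_image act_inverse_act[OF t])
  have "lin_indep_on k (act t ` X) M \<longleftrightarrow> lin_indep_on k X M" for M
  proof
    assume "lin_indep_on k (act t ` X) M"
    then have "lin_indep_on k (act (inverse \<circ> t) ` act t ` X) M"
      by (rule lin_indep_on_act_image[OF inv_t])
    then show "lin_indep_on k X M"
      unfolding cancel .
  qed (rule lin_indep_on_act_image[OF t])
  then show ?thesis
    unfolding hilbert_function_def by simp
qed

lemma proj_degree_act_image:
  assumes t: "\<And>i. t i \<noteq> 0"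
  shows "proj_degree k (act t ` X) = proj_degree k X"
  unfolding proj_degree_def proj_dim_image[OF zariski_homeomorphism_act[OF t]]
    hilbert_function_act_image[OF t] ..

lemma torus_nonzero: "t \<in> torus k \<Longrightarrow> t i \<noteq> 0"
  unfolding torus_def by (cases "i \<in> {1..k}") auto

lemma inverse_torus: "t \<in> torus k \<Longrightarrow> inverse \<circ> t \<in> torus k"
  unfolding torus_def by auto

lemma act_commute: "act g (act t z) = act t (act g z)"
  unfolding act_def by (simp add: mult.left_commute)

lemma cox_orbit_act: "cox_orbit k u (act t z) = act t ` cox_orbit k u z"
  unfolding cox_orbit_def image_image act_commute ..

definition orbit_cone :: "nat \<Rightarrow> (nat \<Rightarrow> int^'n) \<Rightarrow> (nat \<Rightarrow> complex) \<Rightarrow> (nat \<Rightarrow> complex) set" where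
  "orbit_cone k u z = {x \<in> pspace k. \<exists>c y. c \<noteq> 0 \<and> y \<in> cox_orbit k u z \<and> x 0 = c \<and>
     (\<forall>i\<in>{1..k}. x i = c * y i)}"

lemma orbit_closure_eq_zariski_closure_orbit_cone:
  "orbit_closure k u z = zariski_closure k (orbit_cone k u z)"
  unfolding orbit_closure_def orbit_cone_def by (rule refl)

lemma act_image_orbit_cone_subset:
  assumes t: "t \<in> torus k"
  shows "act t ` orbit_cone k u z \<subseteq> orbit_cone k u (act t z)"
proof
  fix x assume "x \<in> act t ` orbit_cone k u z"
  then obtain x' c y where x: "x = act t x'" and x': "x' \<in> pspace k" and c: "c \<noteq> 0"
    and y: "y \<in> cox_orbit k u z" and x'0: "x' 0 = c" and x'y: "\<forall>i\<in>{1..k}. x' i = c * y i"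
    unfolding orbit_cone_def by blast
  have "x \<in> pspace k"
    unfolding x using x' by (simp add: pspace_act_iff torus_nonzero[OF t])
  moreover have "act t y \<in> cox_orbit k u (act t z)"
    unfolding cox_orbit_act using y by (rule imageI)
  moreover have "x 0 = c"
    using t x'0 unfolding x act_def torus_def by simp
  moreover have "\<forall>i\<in>{1..k}. x i = c * act t y i"
    using x'y unfolding x act_def by (simp add: mult.left_commute)
  ultimately show "x \<in> orbit_cone k u (act t z)"
    unfolding orbit_cone_def using c by blast
qed

lemma orbit_cone_act:
  assumes t: "t \<in> torus k"
  shows "orbit_cone k u (act t z) = act t ` orbit_cone k u z"
proof
  have "act (inverse \<circ> t) ` orbit_cone k u (act t z) \<subseteq> orbit_cone k u z"
    using act_image_orbit_cone_subset[OF inverse_torus[OF t], of u "act t z"]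
    by (simp add: act_inverse_act torus_nonzero[OF t])
  then have "act t ` act (inverse \<circ> t) ` orbit_cone k u (act t z) \<subseteq> act t ` orbit_cone k u z"
    by (rule image_mono)
  then show "orbit_cone k u (act t z) \<subseteq> act t ` orbit_cone k u z"
    by (simp add: image_image act_act_inverse torus_nonzero[OF t])
qed (rule act_image_orbit_cone_subset[OF t])

lemma orbit_closure_act:
  assumes t: "t \<in> torus k"
  shows "orbit_closure k u (act t z) = act t ` orbit_closure k u z"
  unfolding orbit_closure_eq_zariski_closure_orbit_cone orbit_cone_act[OF t]
  by (rule zariski_closure_image[OF zariski_homeomorphism_act[OF torus_nonzero[OF t]]])

lemma torus_act_eq_if_same_support:
  assumes "z \<in> cspace k" and "z' \<in> cspace k" and supp: "{i. z i \<noteq> 0} = {i. z' i \<noteq> 0}"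
  shows "\<exists>t\<in>torus k. act t z = z'"
proof
  define t where "t i = (if i \<in> {1..k} \<and> z i \<noteq> 0 then z' i / z i else 1)" for i
  show "t \<in> torus k"
    unfolding torus_def t_def using supp by auto
  show "act t z = z'"
    using assms unfolding act_def t_def cspace_def fun_eq_iff by auto
qed

theorem corollary3p3:
  fixes \<Sigma> :: "(real^'n) set set" and k :: nat and u :: "nat \<Rightarrow> int^'n"
  assumes "complete_fan \<Sigma>"
    and "ray_generators \<Sigma> k u"
  shows "(\<forall>z\<in>cspace k - base_locus \<Sigma> k u. \<forall>t\<in>torus k.
            proj_dim k (orbit_closure k u (act t z)) = proj_dim k (orbit_closure k u z) \<and>
            proj_degree k (orbit_closure k u (act t z)) = proj_degree k (orbit_closure k u z))
       \<and> (\<forall>z\<in>cspace k - base_locus \<Sigma> k u. \<forall>z'\<in>cspace k - base_locus \<Sigma> k u.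
            {i. z i \<noteq> 0} = {i. z' i \<noteq> 0} \<longrightarrow>
            proj_dim k (orbit_closure k u z) = proj_dim k (orbit_closure k u z') \<and>
            proj_degree k (orbit_closure k u z) = proj_degree k (orbit_closure k u z'))"
proof -
  have torus_invariant:
    "proj_dim k (orbit_closure k u (act t z)) = proj_dim k (orbit_closure k u z) \<and>
     proj_degree k (orbit_closure k u (act t z)) = proj_degree k (orbit_closure k u z)"
    if t: "t \<in> torus k" for t z
    unfolding orbit_closure_act[OF t]
      proj_dim_image[OF zariski_homeomorphism_act[OF torus_nonzero[OF t]]]
      proj_degree_act_image[OF torus_nonzero[OF t]]
    by simp
  have "proj_dim k (orbit_closure k u z) = proj_dim k (orbit_closure k u z') \<and>
        proj_degree k (orbit_closure k u z) = proj_degree k (orbit_closure k u z')"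
    if same_support: "z \<in> cspace k" "z' \<in> cspace k" "{i. z i \<noteq> 0} = {i. z' i \<noteq> 0}" for z z'
  proof -
    obtain t where "t \<in> torus k" and "act t z = z'"
      using torus_act_eq_if_same_support[OF same_support] by blast
    then show ?thesis
      using torus_invariant[of t z] by simp
  qed
  with torus_invariant show ?thesis
    by blast
qed

end
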